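(* Let $k \geq 3$ and let $F$ be a $k$-edge graph with $\gamma(F)=1$. Let $s\ge 1$ and let $\Gamma_1,\dots,\Gamma_s$ be pairwise vertex-disjoint graphs such that, for each $j \in [s]$, $\Gamma_j$ is either a pure $(|E(\Gamma_j)|,F)$-special graph or a copy of $F+e$ for some $e \in E(\overline{F})$. For each $j \in \{2,\dots,s\}$ let $v_j \in V(\Gamma_1)$ and $w_j \in V(\Gamma_j)$. Let $\Gamma$ be the graph with vertex set $\bigcup_{j=1}^s V(\Gamma_j)$ and edge set $\bigcup_{j=1}^s E(\Gamma_j)\cup\{v_jw_j \colon 2\le j\le s\}$, and let $m = |E(\Gamma)|$. If $\iota(\Gamma,F) = \frac{m+1}{k+2}$, then $\Gamma$ is an $(m,F)$-special graph or a copy of $F+e$ for some $e\in E(\overline{F})$.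
   Context: All graphs are finite and simple; $[s]=\{1,\dots,s\}$. For $D \subseteq V(G)$, $N_G[D]$ is the closed neighbourhood of $D$. A set $D \subseteq V(G)$ is an $F$-isolating set of $G$ if $G - N_G[D]$ contains no subgraph isomorphic to $F$; $\iota(G,F)$ is the minimum size of such a set. $\gamma(F)=1$ means $F$ has a vertex adjacent to all other vertices of $F$. $\overline{F}$ is the complement of $F$ and $F+e = (V(F),E(F)\cup\{e\})$. ($m,F$)-special graphs: let $F$ be a connected $k$-edge graph. Write $m+1 = q(k+2)+r$ with integers $q \ge 0$, $0 \le r \le k+1$. If $q = 0$, an $(m,F)$-special graph is any connected $m$-edge graph. If $q \geq 1$, take distinct vertices $v_1,\dots,v_q$, copies $F_1,\dots,F_q$ of $F$ such that $V(F_1),\dots,V(F_q),\{v_1,\dots,v_q\}$ are pairwise disjoint, vertices $w_i \in V(F_i)$, and let $G_i$ be the graph with vertex set $\{v_i\}\cup V(F_i)$ and edge set $E(F_i)\cup\{v_iw_i\}$. Let $T$ be a tree with vertex set $\{v_1,\dots,v_q\}$ (the quotient graph) and $T'$ a connected $r$-edge graph with $V(T') \cap \bigcup_i V(G_i) = \{v_q\}$ (the remainder graph). The graph with vertex set $V(T')\cup\bigcup_i V(G_i)$ and edge set $E(T)\cup E(T')\cup \bigcup_i E(G_i)$ is an $(m,F)$-special graph. It is pure if $q\ge1$ and $T'$ has no edges (so $m+1=q(k+2)$). *)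

theory Defs
  imports Complex_Main
begin

definition simple_graph :: "'a set \<Rightarrow> 'a set set \<Rightarrow> bool" where
  "simple_graph V E \<longleftrightarrow> finite V \<and> (\<forall>e\<in>E. e \<subseteq> V \<and> card e = 2)"

definition adj_rel :: "'a set set \<Rightarrow> ('a \<times> 'a) set" where
  "adj_rel E = {(x, y). {x, y} \<in> E}"

definition connected_graph :: "'a set \<Rightarrow> 'a set set \<Rightarrow> bool" where
  "connected_graph V E \<longleftrightarrow> V \<noteq> {} \<and> (\<forall>x\<in>V. \<forall>y\<in>V. (x, y) \<in> (adj_rel E)\<^sup>*)"

definition tree_graph :: "'a set \<Rightarrow> 'a set set \<Rightarrow> bool" where
  "tree_graph V E \<longleftrightarrow> simple_graph V E \<and> connected_graph V E \<and> card E + 1 = card V"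

definition graph_iso :: "'b set \<Rightarrow> 'b set set \<Rightarrow> 'a set \<Rightarrow> 'a set set \<Rightarrow> bool" where
  "graph_iso V1 E1 V2 E2 \<longleftrightarrow> (\<exists>f. bij_betw f V1 V2 \<and> E2 = (\<lambda>e. f ` e) ` E1)"

definition has_subgraph :: "'a set \<Rightarrow> 'a set set \<Rightarrow> 'b set \<Rightarrow> 'b set set \<Rightarrow> bool" where
  "has_subgraph VH EH VF EF \<longleftrightarrow>
     (\<exists>f. inj_on f VF \<and> f ` VF \<subseteq> VH \<and> (\<forall>e\<in>EF. f ` e \<in> EH))"

definition closed_nbhd :: "'a set \<Rightarrow> 'a set set \<Rightarrow> 'a set \<Rightarrow> 'a set" where
  "closed_nbhd V E D = D \<union> {y\<in>V. \<exists>x\<in>D. {x, y} \<in> E}"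

definition isolating_set :: "'a set \<Rightarrow> 'a set set \<Rightarrow> 'b set \<Rightarrow> 'b set set \<Rightarrow> 'a set \<Rightarrow> bool" where
  "isolating_set V E VF EF D \<longleftrightarrow> D \<subseteq> V \<and>
     (let U = V - closed_nbhd V E D in \<not> has_subgraph U {e\<in>E. e \<subseteq> U} VF EF)"

definition iota :: "'a set \<Rightarrow> 'a set set \<Rightarrow> 'b set \<Rightarrow> 'b set set \<Rightarrow> nat" where
  "iota V E VF EF = (LEAST n. \<exists>D. isolating_set V E VF EF D \<and> card D = n)"

text \<open>gamma(F) = 1: some vertex adjacent to all others.\<close>
definition dom_one :: "'b set \<Rightarrow> 'b set set \<Rightarrow> bool" where
  "dom_one VF EF \<longleftrightarrow> (\<exists>u\<in>VF. \<forall>x\<in>VF. x \<noteq> u \<longrightarrow> {u, x} \<in> EF)"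

definition copy_F_plus_e :: "'b set \<Rightarrow> 'b set set \<Rightarrow> 'a set \<Rightarrow> 'a set set \<Rightarrow> bool" where
  "copy_F_plus_e VF EF V E \<longleftrightarrow>
     (\<exists>e. e \<subseteq> VF \<and> card e = 2 \<and> e \<notin> EF \<and> graph_iso VF (insert e EF) V E)"

definition special_constr :: "nat \<Rightarrow> nat \<Rightarrow> 'b set \<Rightarrow> 'b set set \<Rightarrow> 'a set \<Rightarrow> 'a set set \<Rightarrow> bool" where
  "special_constr q r VF EF V E \<longleftrightarrow>
     (\<exists>(vv :: nat \<Rightarrow> 'a) (FV :: nat \<Rightarrow> 'a set) (FE :: nat \<Rightarrow> 'a set set) (ww :: nat \<Rightarrow> 'a)
        (TE :: 'a set set) (TV' :: 'a set) (TE' :: 'a set set).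
        inj_on vv {1..q} \<and>
        (\<forall>i\<in>{1..q}. graph_iso VF EF (FV i) (FE i)) \<and>
        (\<forall>i\<in>{1..q}. \<forall>j\<in>{1..q}. i \<noteq> j \<longrightarrow> FV i \<inter> FV j = {}) \<and>
        (\<forall>i\<in>{1..q}. FV i \<inter> vv ` {1..q} = {}) \<and>
        (\<forall>i\<in>{1..q}. ww i \<in> FV i) \<and>
        tree_graph (vv ` {1..q}) TE \<and>
        simple_graph TV' TE' \<and> connected_graph TV' TE' \<and> card TE' = r \<and>
        TV' \<inter> (\<Union>i\<in>{1..q}. insert (vv i) (FV i)) = {vv q} \<and>
        V = TV' \<union> (\<Union>i\<in>{1..q}. insert (vv i) (FV i)) \<and>
        E = TE \<union> TE' \<union> (\<Union>i\<in>{1..q}. insert {vv i, ww i} (FE i)))"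

definition special :: "nat \<Rightarrow> 'b set \<Rightarrow> 'b set set \<Rightarrow> 'a set \<Rightarrow> 'a set set \<Rightarrow> bool" where
  "special m VF EF V E \<longleftrightarrow>
     (let k = card EF; q = (m + 1) div (k + 2); r = (m + 1) mod (k + 2) in
      if q = 0 then simple_graph V E \<and> connected_graph V E \<and> card E = m
      else special_constr q r VF EF V E)"

definition pure_special :: "nat \<Rightarrow> 'b set \<Rightarrow> 'b set set \<Rightarrow> 'a set \<Rightarrow> 'a set set \<Rightarrow> bool" where
  "pure_special m VF EF V E \<longleftrightarrow>
     (let k = card EF; q = (m + 1) div (k + 2) in
      q \<ge> 1 \<and> (m + 1) mod (k + 2) = 0 \<and> special_constr q 0 VF EF V E)"

end

(*
  Let q_j be the number of copies of F in Gamma_j (1 for a copy of F + e). Then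
  m + 1 = (q_1 + ... + q_s)(k + 2), so the hypothesis says iota(Gamma, F) = q_1 + ... + q_s.

  Inside a single Gamma_j every vertex lies in a set of q_j vertices whose closed neighbourhood
  meets every copy of F in Gamma_j (the vertex together with all tree vertices but one).
  Moreover, unless Gamma_j has a pure decomposition whose tree contains all its attachment points
  (the v_i for j = 1, and w_j otherwise), q_j - 1 vertices already suffice to destroy every copy
  of F in Gamma_j that avoids the attachment points.

  As F has a dominating vertex, a copy of F in Gamma - N[D] that avoids the edges v_j w_j lies in
  a single Gamma_j. So if some Gamma_j is not rooted at its attachment points, its small set
  together with sets through suitable attachment points of the other Gamma_i isolates F with
  fewer than q_1 + ... + q_s vertices, which is impossible. Otherwise the trees of the
  decompositions, joined by the edges v_j w_j, form a tree, and Gamma is pure (m, F)-special.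
*)

theory Submission
  imports Defs
begin

section \<open>Graphs, neighbourhoods and subgraph copies\<close>

lemma adj_rel_converse [simp]: "(adj_rel E)\<inverse> = adj_rel E"
  unfolding adj_rel_def by (auto simp: insert_commute)

lemma rtrancl_adj_rel_sym: "(x, y) \<in> (adj_rel E)\<^sup>* \<Longrightarrow> (y, x) \<in> (adj_rel E)\<^sup>*"
  using rtrancl_converseI[of x y "adj_rel E"] by simp

lemma rtrancl_adj_rel_mono: "E \<subseteq> E' \<Longrightarrow> (x, y) \<in> (adj_rel E)\<^sup>* \<Longrightarrow> (x, y) \<in> (adj_rel E')\<^sup>*"
proof -
  assume "E \<subseteq> E'" "(x, y) \<in> (adj_rel E)\<^sup>*"
  moreover have "adj_rel E \<subseteq> adj_rel E'" using \<open>E \<subseteq> E'\<close> unfolding adj_rel_def by auto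
  ultimately show ?thesis using rtrancl_mono by blast
qed

lemma simple_graph_finite_edges: "simple_graph V E \<Longrightarrow> finite E"
  unfolding simple_graph_def by (meson Pow_iff finite_Pow_iff finite_subset subsetI)

lemma simple_graph_edge:
  assumes "simple_graph V E" "{x, y} \<in> E"
  shows "x \<noteq> y" "x \<in> V" "y \<in> V"
proof -
  have "{x, y} \<subseteq> V" "card {x, y} = 2" using assms unfolding simple_graph_def by auto
  then show "x \<noteq> y" "x \<in> V" "y \<in> V" by (cases "x = y", simp_all)
qed

lemma tree_graph_neighbour:
  assumes "tree_graph T TE" "x \<in> T" "t \<in> T" "t \<noteq> x"
  obtains t' where "t' \<in> T" "t' \<noteq> x" "{x, t'} \<in> TE"
proof -
  have "(x, t) \<in> (adj_rel TE)\<^sup>*"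
    using assms unfolding tree_graph_def connected_graph_def by blast
  then obtain t' where t': "{x, t'} \<in> TE"
    using assms(4) unfolding adj_rel_def by (auto elim: converse_rtranclE)
  moreover have "simple_graph T TE" using assms(1) unfolding tree_graph_def by blast
  ultimately show thesis using simple_graph_edge that by metis
qed

lemma tree_graph_singleton_iff: "tree_graph {x} TE \<longleftrightarrow> TE = {}"
proof
  assume "tree_graph {x} TE"
  then have "e \<subseteq> {x} \<and> card e = 2" if "e \<in> TE" for e
    using that unfolding tree_graph_def simple_graph_def by blast
  then show "TE = {}" unfolding subset_singleton_iff by fastforce
qed (simp add: tree_graph_def connected_graph_def simple_graph_def)

lemma closed_nbhd_subset: "D \<subseteq> closed_nbhd V E D"
  unfolding closed_nbhd_def by blast

lemma closed_nbhd_adjacent: "y \<in> V \<Longrightarrow> x \<in> D \<Longrightarrow> {x, y} \<in> E \<Longrightarrow> y \<in> closed_nbhd V E D"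
  unfolding closed_nbhd_def by blast

lemma closed_nbhd_mono:
  "D \<subseteq> D' \<Longrightarrow> V \<subseteq> V' \<Longrightarrow> E \<subseteq> E' \<Longrightarrow> closed_nbhd V E D \<subseteq> closed_nbhd V' E' D'"
  unfolding closed_nbhd_def by blast

lemma has_subgraph_mono:
  "VH \<subseteq> VH' \<Longrightarrow> EH \<subseteq> EH' \<Longrightarrow> has_subgraph VH EH VF EF \<Longrightarrow> has_subgraph VH' EH' VF EF"
  unfolding has_subgraph_def by (meson order_trans subsetD)

lemma has_subgraph_card_le:
  assumes "finite VH" "has_subgraph VH EH VF EF"
  shows "card VF \<le> card VH"
proof -
  obtain f where f: "inj_on f VF" "f ` VF \<subseteq> VH" using assms(2) unfolding has_subgraph_def by blast
  then have "card VF = card (f ` VF)" by (simp add: card_image)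
  also have "\<dots> \<le> card VH" using card_mono[OF assms(1) f(2)] .
  finally show ?thesis .
qed

lemma has_subgraph_induced_iff:
  assumes "\<forall>e\<in>EF. e \<subseteq> VF"
  shows "has_subgraph U {e\<in>E. e \<subseteq> U} VF EF \<longleftrightarrow> has_subgraph U E VF EF"
  using assms unfolding has_subgraph_def by (auto simp: image_subset_iff) (meson subsetD)

lemma iota_le_card: "isolating_set V E VF EF D \<Longrightarrow> iota V E VF EF \<le> card D"
  unfolding iota_def by (rule Least_le) blast

lemma graph_iso_card_vertices:
  assumes "graph_iso VF EF W FE" "finite VF"
  shows "finite W" "card W = card VF"
  using assms unfolding graph_iso_def by (auto simp: bij_betw_finite bij_betw_same_card)

lemma graph_iso_card_edges:
  assumes "graph_iso VF EF W FE" "EF \<subseteq> Pow VF"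
  shows "card FE = card EF"
proof -
  obtain g where g: "bij_betw g VF W" "FE = (\<lambda>e. g ` e) ` EF"
    using assms(1) unfolding graph_iso_def by blast
  have "inj_on ((`) g) EF"
    using inj_on_image_Pow[of g VF] g(1) assms(2) inj_on_subset unfolding bij_betw_def by blast
  then show ?thesis using g(2) card_image by metis
qed

lemma graph_iso_simple:
  assumes "graph_iso VF EF W FE" "simple_graph VF EF"
  shows "simple_graph W FE"
proof -
  obtain g where g: "bij_betw g VF W" "FE = (\<lambda>e. g ` e) ` EF"
    using assms(1) unfolding graph_iso_def by blast
  have "g ` e \<subseteq> W \<and> card (g ` e) = 2" if "e \<in> EF" for e
  proof -
    have "e \<subseteq> VF" "card e = 2" using assms(2) that unfolding simple_graph_def by auto
    moreover have "inj_on g e" using g(1) \<open>e \<subseteq> VF\<close> inj_on_subset unfolding bij_betw_def by blast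
    ultimately show ?thesis using g(1) card_image[of g e] unfolding bij_betw_def by auto
  qed
  moreover have "finite W"
    using graph_iso_card_vertices(1)[OF assms(1)] assms(2) unfolding simple_graph_def by blast
  ultimately show ?thesis unfolding simple_graph_def g(2) by simp
qed

lemma no_subgraph_minus_closed_nbhd_singleton:
  assumes "finite V" "card V \<le> card VF + 1" "y \<in> V" "y' \<in> V" "y' \<noteq> y" "{y, y'} \<in> E"
  shows "\<not> has_subgraph (V - closed_nbhd V E {y}) E' VF EF"
proof
  assume copy: "has_subgraph (V - closed_nbhd V E {y}) E' VF EF"
  have "V - closed_nbhd V E {y} \<subseteq> V - {y, y'}"
    using assms(4,6) unfolding closed_nbhd_def by auto
  with copy have "has_subgraph (V - {y, y'}) E' VF EF"
    using has_subgraph_mono[of _ _ E' E'] by blast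
  then have "card VF \<le> card (V - {y, y'})" using has_subgraph_card_le assms(1) by blast
  also have "\<dots> = card V - 2" using assms(1,3-5) by (simp add: card_Diff_subset)
  finally show False using assms(2) card_mono[OF assms(1), of "{y, y'}"] assms(3-5) by simp
qed

section \<open>Pure decompositions\<close>

text \<open>A witness for \<^const>\<open>special_constr\<close> with remainder \<open>0\<close>, indexed by an arbitrary set
  \<open>I\<close> instead of \<open>{1..q}\<close> and without the edgeless remainder graph: block \<open>i\<close> is the
  copy \<open>(FV i, FE i)\<close> of F hanging from the tree vertex \<open>vv i\<close> by the edge \<open>{vv i, ww i}\<close>.\<close>
definition pure_decomp ::
  "'i set \<Rightarrow> 'b set \<Rightarrow> 'b set set \<Rightarrow> 'a set \<Rightarrow> 'a set set \<Rightarrow> ('i \<Rightarrow> 'a) \<Rightarrow> ('i \<Rightarrow> 'a set)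
     \<Rightarrow> ('i \<Rightarrow> 'a set set) \<Rightarrow> ('i \<Rightarrow> 'a) \<Rightarrow> 'a set set \<Rightarrow> bool" where
  "pure_decomp I VF EF V E vv FV FE ww TE \<longleftrightarrow>
     inj_on vv I \<and>
     (\<forall>i\<in>I. graph_iso VF EF (FV i) (FE i)) \<and>
     (\<forall>i\<in>I. \<forall>j\<in>I. i \<noteq> j \<longrightarrow> FV i \<inter> FV j = {}) \<and>
     (\<forall>i\<in>I. FV i \<inter> vv ` I = {}) \<and>
     (\<forall>i\<in>I. ww i \<in> FV i) \<and>
     tree_graph (vv ` I) TE \<and>
     V = (\<Union>i\<in>I. insert (vv i) (FV i)) \<and>
     E = TE \<union> (\<Union>i\<in>I. insert {vv i, ww i} (FE i))"

lemma pure_decompD: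
  assumes "pure_decomp I VF EF V E vv FV FE ww TE"
  shows "inj_on vv I"
    and "i \<in> I \<Longrightarrow> graph_iso VF EF (FV i) (FE i)"
    and "i \<in> I \<Longrightarrow> j \<in> I \<Longrightarrow> i \<noteq> j \<Longrightarrow> FV i \<inter> FV j = {}"
    and "i \<in> I \<Longrightarrow> FV i \<inter> vv ` I = {}"
    and "i \<in> I \<Longrightarrow> ww i \<in> FV i"
    and "tree_graph (vv ` I) TE"
    and "V = (\<Union>i\<in>I. insert (vv i) (FV i))"
    and "E = TE \<union> (\<Union>i\<in>I. insert {vv i, ww i} (FE i))"
  using assms unfolding pure_decomp_def by blast+

lemma special_constr_0_iff:
  assumes "q \<ge> 1"
  shows "special_constr q 0 VF EF V E \<longleftrightarrow>
           (\<exists>vv FV FE ww TE. pure_decomp {1..q} VF EF V E vv FV FE ww TE)"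
proof
  assume "special_constr q 0 VF EF V E"
  then obtain vv FV FE ww TE TV' TE' where
    W: "inj_on vv {1..q}" "\<forall>i\<in>{1..q}. graph_iso VF EF (FV i) (FE i)"
       "\<forall>i\<in>{1..q}. \<forall>j\<in>{1..q}. i \<noteq> j \<longrightarrow> FV i \<inter> FV j = {}"
       "\<forall>i\<in>{1..q}. FV i \<inter> vv ` {1..q} = {}" "\<forall>i\<in>{1..q}. ww i \<in> FV i"
       "tree_graph (vv ` {1..q}) TE"
    and remainder: "simple_graph TV' TE'" "connected_graph TV' TE'" "card TE' = 0"
       "TV' \<inter> (\<Union>i\<in>{1..q}. insert (vv i) (FV i)) = {vv q}"
    and V: "V = TV' \<union> (\<Union>i\<in>{1..q}. insert (vv i) (FV i))"
    and E: "E = TE \<union> TE' \<union> (\<Union>i\<in>{1..q}. insert {vv i, ww i} (FE i))"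
    unfolding special_constr_def by blast
  have "TE' = {}" using remainder(3) simple_graph_finite_edges[OF remainder(1)] by simp
  then have "TV' \<subseteq> {vv q}"
    using remainder(2,4) unfolding connected_graph_def adj_rel_def by auto
  then have "V = (\<Union>i\<in>{1..q}. insert (vv i) (FV i))" using V assms by auto
  then show "\<exists>vv FV FE ww TE. pure_decomp {1..q} VF EF V E vv FV FE ww TE"
    using W E \<open>TE' = {}\<close> unfolding pure_decomp_def by blast
next
  assume "\<exists>vv FV FE ww TE. pure_decomp {1..q} VF EF V E vv FV FE ww TE"
  then obtain vv FV FE ww TE where P: "pure_decomp {1..q} VF EF V E vv FV FE ww TE" by blast
  have "vv q \<in> (\<Union>i\<in>{1..q}. insert (vv i) (FV i))" using assms by auto
  then have "{vv q} \<inter> (\<Union>i\<in>{1..q}. insert (vv i) (FV i)) = {vv q}"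
    and "V = {vv q} \<union> (\<Union>i\<in>{1..q}. insert (vv i) (FV i))"
    using P unfolding pure_decomp_def by blast+
  moreover have "simple_graph {vv q} {}" "connected_graph {vv q} {}"
    unfolding simple_graph_def connected_graph_def by simp_all
  ultimately show "special_constr q 0 VF EF V E"
    using P unfolding special_constr_def pure_decomp_def
    by (intro exI[of _ vv] exI[of _ FV] exI[of _ FE] exI[of _ ww] exI[of _ TE] exI[of _ "{vv q}"]
        exI[of _ "{}"]) simp
qed

lemma special_if_pure_special: "pure_special m VF EF V E \<Longrightarrow> special m VF EF V E"
  unfolding pure_special_def special_def Let_def by auto

lemma special_if_special_constr:
  assumes "m + 1 = q * (card EF + 2)" "q \<ge> 1" "special_constr q 0 VF EF V E"
  shows "special m VF EF V E"
proof -
  have "(m + 1) div (card EF + 2) = q"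
    unfolding assms(1) by (rule nonzero_mult_div_cancel_right) simp
  moreover have "(m + 1) mod (card EF + 2) = 0" unfolding assms(1) by (rule mod_mult_self2_is_0)
  ultimately show ?thesis using assms(2,3) unfolding special_def Let_def by simp
qed

lemma pure_decomp_reindex:
  assumes g: "bij_betw g J I" and P: "pure_decomp I VF EF V E vv FV FE ww TE"
  shows "pure_decomp J VF EF V E (vv \<circ> g) (FV \<circ> g) (FE \<circ> g) (ww \<circ> g) TE"
proof -
  have gJ: "g ` J = I" and inj: "inj_on g J" using g unfolding bij_betw_def by blast+
  have UN: "(\<Union>j\<in>J. h (g j)) = (\<Union>i\<in>I. h i)" for h :: "_ \<Rightarrow> 'x set"
    using gJ by blast
  have img: "(vv \<circ> g) ` J = vv ` I" by (simp only: image_comp[symmetric] gJ)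
  have "inj_on (vv \<circ> g) J" using P inj gJ comp_inj_on unfolding pure_decomp_def by metis
  moreover have "g i \<noteq> g j" if "i \<in> J" "j \<in> J" "i \<noteq> j" for i j
    using inj that unfolding inj_on_def by blast
  ultimately show ?thesis
    using P gJ unfolding pure_decomp_def img UN[of "\<lambda>i. insert (vv i) (FV i)"]
      UN[of "\<lambda>i. insert {vv i, ww i} (FE i)"] by (simp add: image_subset_iff) blast
qed

section \<open>Isolating F inside one block\<close>

locale centred_pattern =
  fixes VF :: "'b set" and EF :: "'b set set" and u :: 'b
  assumes pattern_simple: "simple_graph VF EF"
    and centre: "u \<in> VF"
    and centre_adjacent: "\<And>x. x \<in> VF \<Longrightarrow> x \<noteq> u \<Longrightarrow> {u, x} \<in> EF"
    and pattern_edges_nonempty: "EF \<noteq> {}"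
begin

lemma finite_pattern: "finite VF"
  using pattern_simple unfolding simple_graph_def by blast

lemma pattern_edge: "e \<in> EF \<Longrightarrow> e \<subseteq> VF \<and> card e = 2"
  using pattern_simple unfolding simple_graph_def by blast

lemma pattern_edges_Pow: "EF \<subseteq> Pow VF"
  using pattern_edge by blast

lemma pattern_has_neighbour:
  assumes "x \<in> VF"
  obtains x' where "x' \<in> VF" "x' \<noteq> x" "{x, x'} \<in> EF"
proof (cases "x = u")
  case True
  obtain e where "e \<in> EF" using pattern_edges_nonempty by blast
  then obtain a b where "{a, b} \<in> EF" "a \<noteq> b" using pattern_edge by (metis card_2_iff)
  then have "a \<in> VF" "b \<in> VF" using pattern_edge by auto
  then obtain x' where "x' \<in> VF" "x' \<noteq> u" using \<open>a \<noteq> b\<close> by metis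
  then show thesis using that centre_adjacent True by blast
next
  case False
  then have "{x, u} \<in> EF" using centre_adjacent assms by (metis insert_commute)
  then show thesis using that centre False by blast
qed

lemma copy_has_neighbour:
  assumes "graph_iso VF EF' W FE" "EF \<subseteq> EF'" "y \<in> W"
  obtains y' where "y' \<in> W" "y' \<noteq> y" "{y, y'} \<in> FE"
proof -
  obtain g where g: "bij_betw g VF W" "FE = (\<lambda>e. g ` e) ` EF'"
    using assms(1) unfolding graph_iso_def by blast
  obtain x where x: "x \<in> VF" "y = g x" using g(1) assms(3) unfolding bij_betw_def by blast
  obtain x' where x': "x' \<in> VF" "x' \<noteq> x" "{x, x'} \<in> EF" using pattern_has_neighbour x(1) by blast
  have "g ` {x, x'} \<in> FE" unfolding g(2) using x'(3) assms(2) by blast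
  then have "{g x, g x'} \<in> FE" by simp
  moreover have "g x' \<in> W" "g x' \<noteq> g x"
    using g(1) x x' unfolding bij_betw_def inj_on_def by auto
  ultimately show thesis using that x(2) by blast
qed

text \<open>A copy of F lies in the closed neighbourhood of the image of its dominating vertex.\<close>
lemma no_subgraph_if_small_nbhds:
  assumes "\<And>z. z \<in> R \<Longrightarrow> \<exists>S. finite S \<and> card S < card VF \<and> {y\<in>R. y = z \<or> {z, y} \<in> E} \<subseteq> S"
  shows "\<not> has_subgraph R E VF EF"
proof
  assume "has_subgraph R E VF EF"
  then obtain f where f: "inj_on f VF" "f ` VF \<subseteq> R" "\<forall>e\<in>EF. f ` e \<in> E"
    unfolding has_subgraph_def by blast
  have fu: "f u \<in> R" using f(2) centre by blast
  have "f x \<in> {y\<in>R. y = f u \<or> {f u, y} \<in> E}" if "x \<in> VF" for x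
  proof (cases "x = u")
    case False
    then have "f ` {u, x} \<in> E" using f(3) centre_adjacent that by blast
    then show ?thesis using f(2) that by auto
  qed (use fu in simp)
  then have "f ` VF \<subseteq> {y\<in>R. y = f u \<or> {f u, y} \<in> E}" by blast
  moreover obtain S where "finite S" "card S < card VF" "{y\<in>R. y = f u \<or> {f u, y} \<in> E} \<subseteq> S"
    using assms fu by blast
  ultimately have "card (f ` VF) < card VF" by (meson card_mono le_less_trans order_trans)
  then show False using card_image[OF f(1)] by simp
qed

lemma pure_decomp_singleton_at:
  assumes "simple_graph V E" "card V = card VF + 1" "card E = card EF + 1" "{a, a'} \<in> E"
    and "has_subgraph (V - {a}) E VF EF"
  shows "\<exists>FE'. pure_decomp {i} VF EF V E (\<lambda>_. a) (\<lambda>_. V - {a}) (\<lambda>_. FE') (\<lambda>_. a') {}"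
proof -
  have finV: "finite V" and finE: "finite E"
    using assms(1) simple_graph_finite_edges unfolding simple_graph_def by blast+
  have a: "a \<in> V" "a' \<in> V" "a \<noteq> a'" using simple_graph_edge[OF assms(1,4)] by blast+
  obtain f where f: "inj_on f VF" "f ` VF \<subseteq> V - {a}" "\<forall>e\<in>EF. f ` e \<in> E"
    using assms(5) unfolding has_subgraph_def by blast
  have "card (f ` VF) = card (V - {a})" using card_image[OF f(1)] assms(2) finV a(1) by simp
  then have fV: "f ` VF = V - {a}" using card_subset_eq[OF _ f(2)] finV by blast
  define FE' where "FE' = (\<lambda>e. f ` e) ` EF"
  have iso: "graph_iso VF EF (V - {a}) FE'"
    unfolding graph_iso_def FE'_def bij_betw_def using f(1) fV by blast
  have "card FE' = card EF" using graph_iso_card_edges[OF iso pattern_edges_Pow] .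
  moreover have "FE' \<subseteq> E" using f(3) unfolding FE'_def by blast
  moreover have "{a, a'} \<notin> FE'" using fV pattern_edge unfolding FE'_def by blast
  ultimately have "card (insert {a, a'} FE') = card E" "insert {a, a'} FE' \<subseteq> E"
    using assms(3,4) finite_subset[OF _ finE] by auto
  then have "E = insert {a, a'} FE'" using card_subset_eq finE by metis
  moreover have "tree_graph {a} {}" by (simp add: tree_graph_singleton_iff)
  ultimately have "pure_decomp {i} VF EF V E (\<lambda>_. a) (\<lambda>_. V - {a}) (\<lambda>_. FE') (\<lambda>_. a') {}"
    using iso a unfolding pure_decomp_def by (simp add: insert_absorb)
  then show ?thesis by blast
qed

lemma copy_F_plus_eD:
  assumes "copy_F_plus_e VF EF V E"
  shows "finite V" "card V = card VF" "card E = card EF + 1"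
    and "y \<in> V \<Longrightarrow> \<exists>y'\<in>V. y' \<noteq> y \<and> {y, y'} \<in> E"
proof -
  obtain e where e: "e \<subseteq> VF" "e \<notin> EF" "graph_iso VF (insert e EF) V E"
    using assms unfolding copy_F_plus_e_def by blast
  show "finite V" "card V = card VF" using graph_iso_card_vertices[OF e(3) finite_pattern] by blast+
  have "insert e EF \<subseteq> Pow VF" using e(1) pattern_edges_Pow by blast
  moreover have "finite EF" using pattern_simple simple_graph_finite_edges by blast
  ultimately show "card E = card EF + 1" using graph_iso_card_edges[OF e(3)] e(2) by simp
  show "\<exists>y'\<in>V. y' \<noteq> y \<and> {y, y'} \<in> E" if "y \<in> V"
    using copy_has_neighbour[OF e(3) _ that] by blast
qed

end

locale decomposed_graph = centred_pattern VF EF u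
  for VF :: "'b set" and EF :: "'b set set" and u :: 'b +
  fixes I :: "'i set" and V :: "'a set" and E :: "'a set set"
    and vv :: "'i \<Rightarrow> 'a" and FV :: "'i \<Rightarrow> 'a set" and FE :: "'i \<Rightarrow> 'a set set"
    and ww :: "'i \<Rightarrow> 'a" and TE :: "'a set set"
  assumes decomp: "pure_decomp I VF EF V E vv FV FE ww TE"
begin

lemma roots_inj: "inj_on vv I"
  and cell_iso: "i \<in> I \<Longrightarrow> graph_iso VF EF (FV i) (FE i)"
  and cells_disjoint: "i \<in> I \<Longrightarrow> j \<in> I \<Longrightarrow> i \<noteq> j \<Longrightarrow> FV i \<inter> FV j = {}"
  and cell_not_root: "i \<in> I \<Longrightarrow> FV i \<inter> vv ` I = {}"
  and attachment_in_cell: "i \<in> I \<Longrightarrow> ww i \<in> FV i"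
  and tree_of_roots: "tree_graph (vv ` I) TE"
  and vertices_eq: "V = (\<Union>i\<in>I. insert (vv i) (FV i))"
  and edges_eq: "E = TE \<union> (\<Union>i\<in>I. insert {vv i, ww i} (FE i))"
  using pure_decompD[OF decomp] by blast+

lemma finite_index: "finite I"
  using tree_of_roots roots_inj finite_image_iff unfolding tree_graph_def simple_graph_def by blast

lemma finite_cell: "i \<in> I \<Longrightarrow> finite (FV i)"
  and card_cell: "i \<in> I \<Longrightarrow> card (FV i) = card VF"
  using graph_iso_card_vertices[OF cell_iso finite_pattern] by blast+

lemma cell_simple: "i \<in> I \<Longrightarrow> simple_graph (FV i) (FE i)"
  using graph_iso_simple[OF cell_iso pattern_simple] .

lemma finite_vertices: "finite V"
  using vertices_eq finite_index finite_cell by simp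

lemma root_in_vertices: "i \<in> I \<Longrightarrow> vv i \<in> V"
  and cell_in_vertices: "i \<in> I \<Longrightarrow> FV i \<subseteq> V"
  and attachment_edge: "i \<in> I \<Longrightarrow> {vv i, ww i} \<in> E"
  using vertices_eq edges_eq by blast+

lemma decomposed_simple: "simple_graph V E"
proof -
  have "e \<subseteq> V \<and> card e = 2" if "e \<in> E" for e
  proof -
    consider "e \<in> TE" | i where "i \<in> I" "e = {vv i, ww i}" | i where "i \<in> I" "e \<in> FE i"
      using \<open>e \<in> E\<close> edges_eq by blast
    then show ?thesis
    proof cases
      case 1
      then have "e \<subseteq> vv ` I \<and> card e = 2"
        using tree_of_roots unfolding tree_graph_def simple_graph_def by blast
      moreover have "vv ` I \<subseteq> V" using root_in_vertices by blast
      ultimately show ?thesis by (meson order_trans)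
    next
      case (2 i)
      have "ww i \<in> FV i" "vv i \<in> vv ` I" using 2(1) attachment_in_cell by blast+
      then have "vv i \<noteq> ww i" using cell_not_root[OF 2(1)] by (auto simp: disjoint_iff)
      moreover have "vv i \<in> V" "ww i \<in> V"
        using 2(1) root_in_vertices attachment_in_cell cell_in_vertices by blast+
      ultimately show ?thesis using 2(2) by simp
    next
      case (3 i)
      then have "e \<subseteq> FV i \<and> card e = 2" using cell_simple unfolding simple_graph_def by blast
      then show ?thesis using cell_in_vertices[OF 3(1)] by (meson order_trans)
    qed
  qed
  then show ?thesis using finite_vertices unfolding simple_graph_def by blast
qed

lemma vertex_cases:
  assumes "z \<in> V"
  obtains i where "i \<in> I" "z = vv i" | i where "i \<in> I" "z \<in> FV i"
  using assms vertices_eq by blast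

lemma edge_from_cell:
  assumes i: "i \<in> I" and z: "z \<in> FV i" and e: "{z, y} \<in> E"
  shows "y \<in> FV i \<or> y = vv i"
proof -
  have "z \<notin> vv ` I" using cell_not_root i z by blast
  then have "{z, y} \<notin> TE" using tree_of_roots unfolding tree_graph_def simple_graph_def by blast
  then obtain j where j: "j \<in> I" "{z, y} = {vv j, ww j} \<or> {z, y} \<in> FE j"
    using e edges_eq by blast
  have "vv j \<in> vv ` I" using j(1) by blast
  then have zy: "z = ww j \<and> y = vv j \<or> {z, y} \<subseteq> FV j"
    using j(2) \<open>z \<notin> vv ` I\<close> cell_simple[OF j(1)]
    unfolding simple_graph_def doubleton_eq_iff by blast
  then have "z \<in> FV j" using attachment_in_cell[OF j(1)] by blast
  then have "j = i" using cells_disjoint i j(1) z by blast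
  then show ?thesis using zy by blast
qed

lemma vertex_has_neighbour:
  assumes "y \<in> V"
  obtains y' where "y' \<in> V" "y' \<noteq> y" "{y, y'} \<in> E"
  using assms
proof (cases rule: vertex_cases)
  case (1 i)
  have "ww i \<noteq> vv i" using attachment_in_cell cell_not_root 1(1) by blast
  then show thesis
    using that 1 attachment_in_cell cell_in_vertices attachment_edge by blast
next
  case (2 i)
  then obtain y' where "y' \<in> FV i" "y' \<noteq> y" "{y, y'} \<in> FE i"
    using copy_has_neighbour[OF cell_iso] by blast
  then show thesis using that 2 cell_in_vertices edges_eq by blast
qed

lemma root_has_root_neighbour:
  assumes "i0 \<in> I" "I \<noteq> {i0}"
  obtains i where "i \<in> I" "i \<noteq> i0" "{vv i0, vv i} \<in> E"
proof -
  obtain i1 where "i1 \<in> I" "i1 \<noteq> i0" using assms by blast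
  then have "vv i1 \<noteq> vv i0" using roots_inj assms(1) unfolding inj_on_def by blast
  then obtain t where "t \<in> vv ` I" "t \<noteq> vv i0" "{vv i0, t} \<in> TE"
    using tree_graph_neighbour[OF tree_of_roots] assms(1) \<open>i1 \<in> I\<close> by blast
  then show thesis using that edges_eq by blast
qed

lemma closed_nbhd_roots:
  assumes "i0 \<in> I" "I \<noteq> {i0}" "vv ` (I - {i0}) \<subseteq> D"
  shows "vv ` I \<subseteq> closed_nbhd V E D"
    and "\<And>i. i \<in> I - {i0} \<Longrightarrow> ww i \<in> closed_nbhd V E D"
proof -
  obtain i where i: "i \<in> I" "i \<noteq> i0" "{vv i0, vv i} \<in> E"
    using root_has_root_neighbour assms(1,2) by blast
  have "vv i \<in> D" using assms(3) i(1,2) by blast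
  then have "vv i0 \<in> closed_nbhd V E D"
    using closed_nbhd_adjacent[of "vv i0" V "vv i" D E] root_in_vertices assms(1) i(3)
    by (simp add: insert_commute)
  moreover have "vv ` (I - {i0}) \<subseteq> closed_nbhd V E D"
    using assms(3) closed_nbhd_subset[of D V E] by (rule order_trans)
  ultimately show "vv ` I \<subseteq> closed_nbhd V E D" by (auto simp: image_subset_iff)
  show "ww i \<in> closed_nbhd V E D" if "i \<in> I - {i0}" for i
  proof -
    have i: "i \<in> I" and "vv i \<in> D" using that assms(3) by blast+
    moreover have "ww i \<in> V" using cell_in_vertices[OF i] attachment_in_cell[OF i] by blast
    ultimately show ?thesis using closed_nbhd_adjacent attachment_edge by metis
  qed
qed

lemma no_subgraph_if_cells_cut:
  assumes "R \<subseteq> V" and cut: "\<And>i. i \<in> I \<Longrightarrow> vv i \<notin> R \<and> FV i - R \<noteq> {}"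
  shows "\<not> has_subgraph R E VF EF"
proof (rule no_subgraph_if_small_nbhds)
  fix z assume z: "z \<in> R"
  then obtain i where "i \<in> I" "z \<in> insert (vv i) (FV i)" using vertices_eq assms(1) by blast
  then have i: "i \<in> I" "z \<in> FV i" using cut z by blast+
  obtain c where c: "c \<in> FV i" "c \<notin> R" using cut[OF i(1)] by blast
  have "{y\<in>R. y = z \<or> {z, y} \<in> E} \<subseteq> FV i - {c}"
    using edge_from_cell[OF i] i(2) c cut[OF i(1)] by blast
  moreover have "card (FV i - {c}) < card VF"
    using card_cell[OF i(1)] finite_cell[OF i(1)] c(1) card_Diff1_less by metis
  ultimately show "\<exists>S. finite S \<and> card S < card VF \<and> {y\<in>R. y = z \<or> {z, y} \<in> E} \<subseteq> S"
    using finite_cell[OF i(1)] by blast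
qed

lemma singleton_index_cards:
  assumes "I = {i0}"
  shows "card V = card VF + 1" "card E = card EF + 1"
proof -
  have "TE = {}" using tree_of_roots assms by (simp add: tree_graph_singleton_iff)
  have "vv i0 \<notin> FV i0" using cell_not_root assms by blast
  then show "card V = card VF + 1"
    using vertices_eq assms finite_cell card_cell by simp
  have "{vv i0, ww i0} \<notin> FE i0"
    using \<open>vv i0 \<notin> FV i0\<close> cell_simple assms unfolding simple_graph_def by blast
  moreover have "finite (FE i0)" using cell_simple assms simple_graph_finite_edges by blast
  ultimately show "card E = card EF + 1"
    using edges_eq assms \<open>TE = {}\<close> graph_iso_card_edges[OF cell_iso pattern_edges_Pow] by simp
qed

lemma no_subgraph_all_but_one_root:
  assumes i0: "i0 \<in> I" "I \<noteq> {i0}" and D: "vv ` (I - {i0}) \<subseteq> D"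
    and hit: "FV i0 \<inter> (closed_nbhd V E D \<union> X) \<noteq> {}"
  shows "\<not> has_subgraph (V - closed_nbhd V E D - X) E VF EF"
proof (rule no_subgraph_if_cells_cut)
  fix i assume i: "i \<in> I"
  have "vv i \<in> closed_nbhd V E D" using closed_nbhd_roots(1)[OF i0 D] i by blast
  moreover have "FV i \<inter> (closed_nbhd V E D \<union> X) \<noteq> {}"
  proof (cases "i = i0")
    case False
    then show ?thesis using closed_nbhd_roots(2)[OF i0 D] i attachment_in_cell[OF i] by blast
  qed (use hit in simp)
  ultimately show "vv i \<notin> V - closed_nbhd V E D - X \<and> FV i - (V - closed_nbhd V E D - X) \<noteq> {}"
    by blast
qed blast

lemma isolating_through:
  assumes y: "y \<in> V"
  shows "\<exists>D\<subseteq>V. y \<in> D \<and> card D \<le> card I \<and> \<not> has_subgraph (V - closed_nbhd V E D) E VF EF"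
proof -
  obtain i0 where i0: "i0 \<in> I" "y \<in> insert (vv i0) (FV i0)" using vertices_eq y by blast
  show ?thesis
  proof (cases "I = {i0}")
    case True
    obtain y' where "y' \<in> V" "y' \<noteq> y" "{y, y'} \<in> E" using vertex_has_neighbour y by blast
    then have "\<not> has_subgraph (V - closed_nbhd V E {y}) E VF EF"
      using no_subgraph_minus_closed_nbhd_singleton[OF finite_vertices _ y, of VF y' E E EF]
        singleton_index_cards(1)[OF True] by simp
    then show ?thesis using y True by (intro exI[of _ "{y}"]) simp
  next
    case False
    define D where "D = insert y (vv ` (I - {i0}))"
    have "D \<subseteq> V" unfolding D_def using y root_in_vertices by blast
    have "card D \<le> card (vv ` (I - {i0})) + 1" unfolding D_def by (simp add: card_insert_le_m1)
    also have "\<dots> \<le> card I"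
      using card_image_le[of "I - {i0}" vv] finite_index i0(1) card_Diff1_less[of I i0] by simp
    finally have "card D \<le> card I" .
    have "FV i0 \<inter> closed_nbhd V E D \<noteq> {}"
    proof (cases "y \<in> FV i0")
      case True
      then show ?thesis using closed_nbhd_subset[of D V E] unfolding D_def by blast
    next
      case False
      then have "vv i0 \<in> D" using i0(2) unfolding D_def by blast
      moreover have "ww i0 \<in> V"
        using cell_in_vertices[OF i0(1)] attachment_in_cell[OF i0(1)] by blast
      ultimately have "ww i0 \<in> closed_nbhd V E D"
        using closed_nbhd_adjacent attachment_edge[OF i0(1)] by metis
      then show ?thesis using attachment_in_cell[OF i0(1)] by blast
    qed
    then have "\<not> has_subgraph (V - closed_nbhd V E D - {}) E VF EF"
      using no_subgraph_all_but_one_root[OF i0(1) False] unfolding D_def by blast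
    then have "\<not> has_subgraph (V - closed_nbhd V E D) E VF EF" by simp
    then show ?thesis using \<open>D \<subseteq> V\<close> \<open>card D \<le> card I\<close> unfolding D_def by blast
  qed
qed

text \<open>A copy of F in \<open>V - A\<close> leaves room for a single vertex of \<open>A\<close>, which becomes the new
  root.\<close>
lemma single_block_reroot:
  assumes I: "I = {i0}" and A: "A \<subseteq> V" "a \<in> A" and copy: "has_subgraph (V - A) E VF EF"
  shows "\<exists>vv' FV' FE' ww' TE'. pure_decomp I VF EF V E vv' FV' FE' ww' TE' \<and> A \<subseteq> vv' ` I"
proof -
  have "card VF \<le> card (V - A)" using has_subgraph_card_le copy finite_vertices by blast
  also have "\<dots> = card V - card A"
    using A(1) finite_vertices by (simp add: card_Diff_subset finite_subset)
  finally have "card A \<le> 1"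
    using singleton_index_cards(1)[OF I] card_mono[OF finite_vertices A(1)] by simp
  moreover have "finite A" using finite_subset[OF A(1) finite_vertices] .
  ultimately have "\<forall>x\<in>A. \<forall>y\<in>A. x = y" using card_le_Suc0_iff_eq[of A] by simp
  then have "A = {a}" using A(2) by blast
  obtain a' where "{a, a'} \<in> E" using vertex_has_neighbour A by blast
  then obtain FE' where "pure_decomp {i0} VF EF V E (\<lambda>_. a) (\<lambda>_. V - {a}) (\<lambda>_. FE') (\<lambda>_. a') {}"
    using pure_decomp_singleton_at decomposed_simple singleton_index_cards[OF I] copy \<open>A = {a}\<close>
    by metis
  moreover have "A \<subseteq> (\<lambda>_. a) ` I" using I \<open>A = {a}\<close> by simp
  ultimately show ?thesis unfolding I by (intro exI conjI)
qed

lemma isolating_avoiding: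
  assumes A: "A \<subseteq> V" "\<not> A \<subseteq> vv ` I"
  shows "(\<exists>D\<subseteq>V. card D < card I \<and> \<not> has_subgraph (V - closed_nbhd V E D - A) E VF EF)
    \<or> (\<exists>vv' FV' FE' ww' TE'. pure_decomp I VF EF V E vv' FV' FE' ww' TE' \<and> A \<subseteq> vv' ` I)"
proof -
  obtain a where a: "a \<in> A" "a \<notin> vv ` I" using A(2) by blast
  then obtain i0 where i0: "i0 \<in> I" "a \<in> FV i0" using A(1) vertices_eq by blast
  show ?thesis
  proof (cases "I = {i0}")
    case True
    show ?thesis
    proof (cases "has_subgraph (V - A) E VF EF")
      case True
      then show ?thesis by (intro disjI2 single_block_reroot[OF \<open>I = {i0}\<close> A(1) a(1)])
    next
      case False
      then have "\<not> has_subgraph (V - closed_nbhd V E {} - A) E VF EF"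
        unfolding closed_nbhd_def by simp
      then show ?thesis using \<open>I = {i0}\<close> by (intro disjI1 exI[of _ "{}"]) simp
    qed
  next
    case False
    define D where "D = vv ` (I - {i0})"
    have "D \<subseteq> V" unfolding D_def using root_in_vertices by blast
    have "card D < card I"
      unfolding D_def
      using card_image_le[of "I - {i0}" vv] finite_index i0(1) card_Diff1_less[of I i0]
      by simp
    have "\<not> has_subgraph (V - closed_nbhd V E D - A) E VF EF"
      using no_subgraph_all_but_one_root[OF i0(1) False, of D A] i0(2) a(1) unfolding D_def by blast
    then show ?thesis using \<open>D \<subseteq> V\<close> \<open>card D < card I\<close> by blast
  qed
qed

end

section \<open>Blocks attached to a central block\<close>

locale attached_graphs =
  fixes s :: nat and VG :: "nat \<Rightarrow> 'a set" and EG :: "nat \<Rightarrow> 'a set set" and v w :: "nat \<Rightarrow> 'a"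
  assumes s_pos: "s \<ge> 1"
    and block_simple: "\<And>j. j \<in> {1..s} \<Longrightarrow> simple_graph (VG j) (EG j)"
    and blocks_disjoint: "\<And>i j. i \<in> {1..s} \<Longrightarrow> j \<in> {1..s} \<Longrightarrow> i \<noteq> j \<Longrightarrow> VG i \<inter> VG j = {}"
    and attach: "\<And>j. j \<in> {2..s} \<Longrightarrow> v j \<in> VG 1 \<and> w j \<in> VG j"
begin

abbreviation join_vertices :: "'a set" where
  "join_vertices \<equiv> \<Union>j\<in>{1..s}. VG j"

abbreviation connecting_edges :: "'a set set" where
  "connecting_edges \<equiv> {{v j, w j} | j. j \<in> {2..s}}"

abbreviation join_edges :: "'a set set" where
  "join_edges \<equiv> (\<Union>j\<in>{1..s}. EG j) \<union> connecting_edges"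

lemma same_block: "i \<in> {1..s} \<Longrightarrow> j \<in> {1..s} \<Longrightarrow> x \<in> VG i \<Longrightarrow> x \<in> VG j \<Longrightarrow> i = j"
  using blocks_disjoint by blast

lemma block_edge: "j \<in> {1..s} \<Longrightarrow> e \<in> EG j \<Longrightarrow> e \<subseteq> VG j \<and> card e = 2"
  using block_simple unfolding simple_graph_def by blast

lemma finite_block_edges: "j \<in> {1..s} \<Longrightarrow> finite (EG j)"
  using block_simple simple_graph_finite_edges by blast

lemma attachment_ends:
  assumes "j \<in> {2..s}"
  shows "v j \<in> VG 1" "w j \<in> VG j" "v j \<noteq> w j"
proof -
  show "v j \<in> VG 1" "w j \<in> VG j" using attach assms by blast+
  moreover have "j \<noteq> 1" "j \<in> {1..s}" "1 \<in> {1..s}" using assms by auto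
  ultimately show "v j \<noteq> w j" using same_block by metis
qed

lemma block_edges_disjoint:
  assumes "i \<in> {1..s}" "j \<in> {1..s}" "i \<noteq> j"
  shows "EG i \<inter> EG j = {}"
proof (rule ccontr)
  assume "EG i \<inter> EG j \<noteq> {}"
  then obtain e where e: "e \<in> EG i" "e \<in> EG j" by blast
  then have "e \<noteq> {}" using block_edge assms(1) by fastforce
  then show False
    using block_edge[OF assms(1) e(1)] block_edge[OF assms(2) e(2)] same_block assms by blast
qed

lemma connecting_edge_not_block_edge:
  assumes "j \<in> {2..s}" "i \<in> {1..s}"
  shows "{v j, w j} \<notin> EG i"
proof
  assume "{v j, w j} \<in> EG i"
  then have "v j \<in> VG i" "w j \<in> VG i" using block_edge assms(2) by blast+
  moreover have "j \<in> {1..s}" "1 \<in> {1..s}" "j \<noteq> 1" using assms(1) by auto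
  ultimately show False using attachment_ends[OF assms(1)] same_block assms(2) by metis
qed

lemma connecting_edge_dominated:
  assumes j: "j \<in> {2..s}" and "v j \<in> D \<or> w j \<in> D"
  shows "v j \<in> closed_nbhd join_vertices join_edges D \<and> w j \<in> closed_nbhd join_vertices join_edges D"
proof -
  have edge: "{v j, w j} \<in> join_edges" "{w j, v j} \<in> join_edges"
    using j by (auto simp: insert_commute)
  have ends: "v j \<in> join_vertices" "w j \<in> join_vertices"
    using attachment_ends[OF j] j by auto
  show ?thesis
    using assms(2) closed_nbhd_subset[of D join_vertices join_edges]
      closed_nbhd_adjacent[OF ends(2) _ edge(1)] closed_nbhd_adjacent[OF ends(1) _ edge(2)]
    by blast
qed

lemma connecting_edges_image: "connecting_edges = (\<lambda>j. {v j, w j}) ` {2..s}"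
  by blast

lemma card_connecting_edges: "card connecting_edges = s - 1"
proof -
  have "inj_on (\<lambda>j. {v j, w j}) {2..s}"
  proof (rule inj_onI)
    fix i j assume ij: "i \<in> {2..s}" "j \<in> {2..s}" and eq: "{v i, w i} = {v j, w j}"
    have "w i \<noteq> v j"
      using attachment_ends[OF ij(1)] attachment_ends[OF ij(2)] same_block[of i 1] ij(1) by force
    then have "w i = w j" using eq by (metis doubleton_eq_iff)
    then show "i = j"
      using attachment_ends[OF ij(1)] attachment_ends[OF ij(2)] same_block[of i j] ij by force
  qed
  then show ?thesis unfolding connecting_edges_image by (simp add: card_image)
qed

lemma card_join_edges: "card join_edges = (\<Sum>j=1..s. card (EG j)) + (s - 1)"
proof -
  have "card (\<Union>j\<in>{1..s}. EG j) = (\<Sum>j=1..s. card (EG j))"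
    using card_UN_disjoint[of "{1..s}" EG] finite_block_edges block_edges_disjoint by simp
  moreover have "(\<Union>j\<in>{1..s}. EG j) \<inter> connecting_edges = {}"
    using connecting_edge_not_block_edge by blast
  moreover have "finite connecting_edges" unfolding connecting_edges_image by simp
  ultimately show ?thesis
    using card_Un_disjoint[of "\<Union>j\<in>{1..s}. EG j" connecting_edges] finite_block_edges
      card_connecting_edges by simp
qed

lemma join_simple: "simple_graph join_vertices join_edges"
proof -
  have "e \<subseteq> join_vertices \<and> card e = 2" if e: "e \<in> join_edges" for e
  proof (cases "e \<in> connecting_edges")
    case True
    then obtain j where j: "j \<in> {2..s}" "e = {v j, w j}" by blast
    then have "j \<in> {1..s}" "1 \<in> {1..s}" by auto
    then show ?thesis using attachment_ends[OF j(1)] j(2) by auto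
  next
    case False
    then obtain j where "j \<in> {1..s}" "e \<in> EG j" using e by blast
    then show ?thesis using block_edge by blast
  qed
  moreover have "finite join_vertices" using block_simple unfolding simple_graph_def by simp
  ultimately show ?thesis unfolding simple_graph_def by blast
qed

lemma join_connected:
  assumes "\<And>j. j \<in> {1..s} \<Longrightarrow> connected_graph (VG j) (EG j)"
  shows "connected_graph join_vertices join_edges"
proof -
  have in_block: "(x, y) \<in> (adj_rel join_edges)\<^sup>*" if "j \<in> {1..s}" "x \<in> VG j" "y \<in> VG j" for j x y
    using assms[OF that(1)] that rtrancl_adj_rel_mono[of "EG j" join_edges]
    unfolding connected_graph_def by blast
  have one: "1 \<in> {1..s}" using s_pos by simp
  then obtain b where b: "b \<in> VG 1" using assms unfolding connected_graph_def by blast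
  have to_b: "(x, b) \<in> (adj_rel join_edges)\<^sup>*" if x: "x \<in> join_vertices" for x
  proof -
    obtain j where j: "j \<in> {1..s}" "x \<in> VG j" using x by blast
    show ?thesis
    proof (cases "j = 1")
      case True
      then show ?thesis using in_block j b by blast
    next
      case False
      then have j2: "j \<in> {2..s}" using j(1) by simp
      have "(x, w j) \<in> (adj_rel join_edges)\<^sup>*" using in_block j attachment_ends(2)[OF j2] by blast
      moreover have "(w j, v j) \<in> adj_rel join_edges"
        using j2 unfolding adj_rel_def by (auto simp: insert_commute)
      moreover have "(v j, b) \<in> (adj_rel join_edges)\<^sup>*"
        using in_block one attachment_ends(1)[OF j2] b by blast
      ultimately show ?thesis by (meson rtrancl.rtrancl_into_rtrancl rtrancl_trans)
    qed
  qed
  have "(x, y) \<in> (adj_rel join_edges)\<^sup>*" if "x \<in> join_vertices" "y \<in> join_vertices" for x y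
    using rtrancl_trans[OF to_b[OF that(1)] rtrancl_adj_rel_sym[OF to_b[OF that(2)]]] .
  moreover have "join_vertices \<noteq> {}" using one b by blast
  ultimately show ?thesis unfolding connected_graph_def by blast
qed

lemma card_join_vertices: "card join_vertices = (\<Sum>j=1..s. card (VG j))"
  using card_UN_disjoint[of "{1..s}" VG] block_simple blocks_disjoint
  unfolding simple_graph_def by simp

lemma join_tree:
  assumes "\<And>j. j \<in> {1..s} \<Longrightarrow> tree_graph (VG j) (EG j)"
  shows "tree_graph join_vertices join_edges"
proof -
  have "card join_edges + 1 = (\<Sum>j=1..s. card (EG j) + 1)"
    unfolding sum.distrib using card_join_edges s_pos by simp
  also have "\<dots> = card join_vertices"
    using card_join_vertices assms unfolding tree_graph_def by simp
  finally show ?thesis using join_simple join_connected assms unfolding tree_graph_def by blast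
qed

end

locale attached_decomps = attached_graphs s VG EG v w
  for s :: nat and VG :: "nat \<Rightarrow> 'a set" and EG :: "nat \<Rightarrow> 'a set set" and v w :: "nat \<Rightarrow> 'a" +
  fixes VF :: "'b set" and EF :: "'b set set" and I :: "nat \<Rightarrow> 'i set"
    and vv ww :: "nat \<Rightarrow> 'i \<Rightarrow> 'a" and FV :: "nat \<Rightarrow> 'i \<Rightarrow> 'a set"
    and FE :: "nat \<Rightarrow> 'i \<Rightarrow> 'a set set" and TE :: "nat \<Rightarrow> 'a set set"
  assumes block_decomp: "\<And>j. j \<in> {1..s} \<Longrightarrow>
    pure_decomp (I j) VF EF (VG j) (EG j) (vv j) (FV j) (FE j) (ww j) (TE j)"
begin

lemma block_part: "j \<in> {1..s} \<Longrightarrow> i \<in> I j \<Longrightarrow> insert (vv j i) (FV j i) \<subseteq> VG j"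
  using pure_decompD(7)[OF block_decomp] by blast

lemma joined_roots: "(\<lambda>(j, i). vv j i) ` (SIGMA j:{1..s}. I j) = (\<Union>j\<in>{1..s}. vv j ` I j)"
  by auto

lemma joined_roots_inj: "inj_on (\<lambda>(j, i). vv j i) (SIGMA j:{1..s}. I j)"
proof (rule inj_onI, clarify)
  fix j i j' i' assume "j \<in> {1..s}" "i \<in> I j" "j' \<in> {1..s}" "i' \<in> I j'" "vv j i = vv j' i'"
  then show "j = j' \<and> i = i'"
    using same_block block_part pure_decompD(1)[OF block_decomp] unfolding inj_on_def by blast
qed

lemma joined_cells_disjoint:
  assumes "p \<in> (SIGMA j:{1..s}. I j)" "q \<in> (SIGMA j:{1..s}. I j)" "p \<noteq> q"
  shows "(case p of (j, i) \<Rightarrow> FV j i) \<inter> (case q of (j, i) \<Rightarrow> FV j i) = {}"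
proof -
  obtain j i j' i' where p: "p = (j, i)" "j \<in> {1..s}" "i \<in> I j"
    and q: "q = (j', i')" "j' \<in> {1..s}" "i' \<in> I j'" using assms(1,2) by blast
  show ?thesis
  proof (cases "j = j'")
    case True
    then show ?thesis using pure_decompD(3)[OF block_decomp] p q assms(3) by auto
  next
    case False
    have "FV j i \<subseteq> VG j" "FV j' i' \<subseteq> VG j'" using block_part p(2,3) q(2,3) by blast+
    then show ?thesis using blocks_disjoint[OF p(2) q(2) False] p(1) q(1) by auto
  qed
qed

lemma joined_cell_not_root:
  assumes "p \<in> (SIGMA j:{1..s}. I j)"
  shows "(case p of (j, i) \<Rightarrow> FV j i) \<inter> (\<lambda>(j, i). vv j i) ` (SIGMA j:{1..s}. I j) = {}"
proof -
  obtain j i where p: "p = (j, i)" "j \<in> {1..s}" "i \<in> I j" using assms by blast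
  have "FV j i \<inter> vv j' ` I j' = {}" if "j' \<in> {1..s}" for j'
  proof (cases "j = j'")
    case True
    then show ?thesis using pure_decompD(4)[OF block_decomp] p by blast
  next
    case False
    then show ?thesis
      using blocks_disjoint[OF p(2) that] block_part[OF p(2,3)] pure_decompD(7)[OF block_decomp[OF that]]
      by blast
  qed
  then show ?thesis unfolding joined_roots using p(1) by blast
qed

lemma joined_tree:
  assumes rooted: "\<And>j. j \<in> {2..s} \<Longrightarrow> v j \<in> vv 1 ` I 1 \<and> w j \<in> vv j ` I j"
  shows "tree_graph ((\<lambda>(j, i). vv j i) ` (SIGMA j:{1..s}. I j)) ((\<Union>j\<in>{1..s}. TE j) \<union> connecting_edges)"
proof -
  note tree = pure_decompD(6)[OF block_decomp]
  interpret trees: attached_graphs s "\<lambda>j. vv j ` I j" TE v w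
  proof
    show "simple_graph (vv j ` I j) (TE j)" if "j \<in> {1..s}" for j
      using tree[OF that] unfolding tree_graph_def by blast
    show "vv i ` I i \<inter> vv j ` I j = {}" if "i \<in> {1..s}" "j \<in> {1..s}" "i \<noteq> j" for i j
      using blocks_disjoint[OF that] block_part that(1,2) by blast
  qed (use s_pos rooted in auto)
  show ?thesis unfolding joined_roots using trees.join_tree tree by blast
qed

lemma join_pure_decomp:
  assumes rooted: "\<And>j. j \<in> {2..s} \<Longrightarrow> v j \<in> vv 1 ` I 1 \<and> w j \<in> vv j ` I j"
  shows "pure_decomp (SIGMA j:{1..s}. I j) VF EF join_vertices join_edges
           (\<lambda>(j, i). vv j i) (\<lambda>(j, i). FV j i) (\<lambda>(j, i). FE j i) (\<lambda>(j, i). ww j i)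
           ((\<Union>j\<in>{1..s}. TE j) \<union> connecting_edges)"
proof -
  have UN_Sigma: "(\<Union>p\<in>(SIGMA j:{1..s}. I j). f p) = (\<Union>j\<in>{1..s}. \<Union>i\<in>I j. f (j, i))"
    for f :: "_ \<Rightarrow> 'x set"
    by auto
  note parts = pure_decompD[OF block_decomp]
  show ?thesis
    unfolding pure_decomp_def
  proof (intro conjI)
    show "join_vertices = (\<Union>p\<in>(SIGMA j:{1..s}. I j).
        insert (case p of (j, i) \<Rightarrow> vv j i) (case p of (j, i) \<Rightarrow> FV j i))"
      unfolding UN_Sigma using parts(7) by simp
    show "join_edges = (\<Union>j\<in>{1..s}. TE j) \<union> connecting_edges \<union>
        (\<Union>p\<in>(SIGMA j:{1..s}. I j). insert {case p of (j, i) \<Rightarrow> vv j i, case p of (j, i) \<Rightarrow> ww j i}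
          (case p of (j, i) \<Rightarrow> FE j i))"
      unfolding UN_Sigma using parts(8) by auto
  qed (use joined_roots_inj joined_cells_disjoint joined_cell_not_root joined_tree[OF rooted]
        parts(2,5) in auto)
qed

end

locale attached_blocks = centred_pattern VF EF u + attached_graphs s VG EG v w
  for VF :: "'b set" and EF :: "'b set set" and u :: 'b
    and s :: nat and VG :: "nat \<Rightarrow> 'a set" and EG :: "nat \<Rightarrow> 'a set set" and v w :: "nat \<Rightarrow> 'a" +
  assumes block_type: "\<And>j. j \<in> {1..s} \<Longrightarrow>
    pure_special (card (EG j)) VF EF (VG j) (EG j) \<or> copy_F_plus_e VF EF (VG j) (EG j)"
begin

definition blocks :: "nat \<Rightarrow> nat" where
  "blocks j = (card (EG j) + 1) div (card EF + 2)"

definition attachments :: "nat \<Rightarrow> 'a set" where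
  "attachments j = (if j = 1 then v ` {2..s} else {w j})"

definition rooted_block :: "nat \<Rightarrow> bool" where
  "rooted_block j \<longleftrightarrow> (\<exists>vv FV FE ww TE. pure_decomp {1..blocks j} VF EF (VG j) (EG j) vv FV FE ww TE
     \<and> attachments j \<subseteq> vv ` {1..blocks j})"

lemma card_block_edges:
  assumes "j \<in> {1..s}"
  shows "card (EG j) + 1 = blocks j * (card EF + 2)" "blocks j \<ge> 1"
proof -
  have "card (EG j) + 1 = blocks j * (card EF + 2) \<and> blocks j \<ge> 1"
  proof (cases "pure_special (card (EG j)) VF EF (VG j) (EG j)")
    case True
    then have "(card EF + 2) dvd (card (EG j) + 1)" "blocks j \<ge> 1"
      unfolding pure_special_def Let_def blocks_def by (simp_all add: dvd_eq_mod_eq_0)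
    then show ?thesis unfolding blocks_def using dvd_div_mult_self by metis
  next
    case False
    then have "card (EG j) = card EF + 1" using block_type[OF assms] copy_F_plus_eD(3) by blast
    then show ?thesis unfolding blocks_def by simp
  qed
  then show "card (EG j) + 1 = blocks j * (card EF + 2)" "blocks j \<ge> 1" by blast+
qed

lemma sum_blocks_pos: "(\<Sum>j=1..s. blocks j) \<ge> 1"
  using card_block_edges(2)[of 1] s_pos member_le_sum[of 1 "{1..s}" blocks] by simp

lemma card_join_edges_blocks: "card join_edges + 1 = (\<Sum>j=1..s. blocks j) * (card EF + 2)"
proof -
  have "card join_edges + 1 = (\<Sum>j=1..s. card (EG j) + 1)"
    unfolding sum.distrib using card_join_edges s_pos by simp
  also have "\<dots> = (\<Sum>j=1..s. blocks j) * (card EF + 2)"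
    unfolding sum_distrib_right using card_block_edges(1) by simp
  finally show ?thesis .
qed

lemma card_join_edges_ratio:
  "real (card join_edges + 1) / real (card EF + 2) = real (\<Sum>j=1..s. blocks j)"
  unfolding card_join_edges_blocks of_nat_mult by (rule nonzero_mult_div_cancel_right) simp

lemma pure_block_decomp:
  assumes "j \<in> {1..s}" "pure_special (card (EG j)) VF EF (VG j) (EG j)"
  shows "\<exists>vv FV FE ww TE. pure_decomp {1..blocks j} VF EF (VG j) (EG j) vv FV FE ww TE"
proof -
  have "special_constr (blocks j) 0 VF EF (VG j) (EG j)"
    using assms(2) unfolding pure_special_def Let_def blocks_def by simp
  then show ?thesis using special_constr_0_iff[OF card_block_edges(2)[OF assms(1)]] by blast
qed

lemma block_isolating_through:
  assumes j: "j \<in> {1..s}" and y: "y \<in> VG j"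
  shows "\<exists>D\<subseteq>VG j. y \<in> D \<and> card D \<le> blocks j \<and>
           \<not> has_subgraph (VG j - closed_nbhd (VG j) (EG j) D) (EG j) VF EF"
proof (cases "pure_special (card (EG j)) VF EF (VG j) (EG j)")
  case True
  then obtain vv FV FE ww TE where "pure_decomp {1..blocks j} VF EF (VG j) (EG j) vv FV FE ww TE"
    using pure_block_decomp j by blast
  then interpret decomposed_graph VF EF u "{1..blocks j}" "VG j" "EG j" vv FV FE ww TE
    by unfold_locales
  show ?thesis using isolating_through[OF y] by simp
next
  case False
  then have copy: "copy_F_plus_e VF EF (VG j) (EG j)" using block_type j by blast
  obtain y' where "y' \<in> VG j" "y' \<noteq> y" "{y, y'} \<in> EG j"
    using copy_F_plus_eD(4)[OF copy y] by blast
  then have "\<not> has_subgraph (VG j - closed_nbhd (VG j) (EG j) {y}) (EG j) VF EF"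
    using no_subgraph_minus_closed_nbhd_singleton[OF copy_F_plus_eD(1)[OF copy] _ y,
        of VF y' "EG j" "EG j" EF]
      copy_F_plus_eD(2)[OF copy] by simp
  then show ?thesis using y card_block_edges(2)[OF j] by (intro exI[of _ "{y}"]) simp
qed

lemma block_isolating_avoiding:
  assumes j: "j \<in> {1..s}" and A: "A \<subseteq> VG j" "A \<noteq> {}"
  shows "(\<exists>D\<subseteq>VG j. card D < blocks j \<and>
            \<not> has_subgraph (VG j - closed_nbhd (VG j) (EG j) D - A) (EG j) VF EF)
    \<or> (\<exists>vv FV FE ww TE. pure_decomp {1..blocks j} VF EF (VG j) (EG j) vv FV FE ww TE
          \<and> A \<subseteq> vv ` {1..blocks j})"
proof (cases "pure_special (card (EG j)) VF EF (VG j) (EG j)")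
  case True
  then obtain vv FV FE ww TE where P: "pure_decomp {1..blocks j} VF EF (VG j) (EG j) vv FV FE ww TE"
    using pure_block_decomp j by blast
  then interpret decomposed_graph VF EF u "{1..blocks j}" "VG j" "EG j" vv FV FE ww TE
    by unfold_locales
  show ?thesis
  proof (cases "A \<subseteq> vv ` {1..blocks j}")
    case True
    then show ?thesis using P by blast
  next
    case False
    then show ?thesis using isolating_avoiding[OF A(1)] by simp
  qed
next
  case False
  then have copy: "copy_F_plus_e VF EF (VG j) (EG j)" using block_type j by blast
  have "card A \<ge> 1" using A copy_F_plus_eD(1)[OF copy] finite_subset
    by (metis One_nat_def Suc_leI card_gt_0_iff)
  then have "card (VG j - A) < card VF"
    using copy_F_plus_eD(1,2)[OF copy] A(1) card_mono[of "VG j" A]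
    by (simp add: card_Diff_subset finite_subset)
  then have "\<not> has_subgraph (VG j - A) (EG j) VF EF"
    using has_subgraph_card_le[of "VG j - A" "EG j" VF EF] copy_F_plus_eD(1)[OF copy] by auto
  then have "\<not> has_subgraph (VG j - closed_nbhd (VG j) (EG j) {} - A) (EG j) VF EF"
    unfolding closed_nbhd_def by simp
  moreover have "blocks j = 1" using copy_F_plus_eD(3)[OF copy] unfolding blocks_def by simp
  ultimately show ?thesis by (intro disjI1 exI[of _ "{}"]) simp
qed

lemma join_edge_in_block:
  assumes "e \<in> join_edges" "e \<subseteq> join_vertices - closed_nbhd join_vertices join_edges D"
    and "\<And>j. j \<in> {2..s} \<Longrightarrow> v j \<in> closed_nbhd join_vertices join_edges D"
    and "j \<in> {1..s}" "x \<in> e" "x \<in> VG j"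
  shows "e \<in> EG j"
proof -
  obtain j' where j': "j' \<in> {1..s}" "e \<in> EG j'"
    using assms(1-3) by blast
  have "x \<in> VG j'" using block_edge[OF j'] assms(5) by blast
  then have "j' = j" by (rule same_block[OF j'(1) assms(4) _ assms(6)])
  then show ?thesis using j' by simp
qed

text \<open>Since F has a dominating vertex, a copy of F that avoids the connecting edges lies in a
  single block.\<close>
lemma isolating_set_of_blocks:
  assumes D: "D \<subseteq> join_vertices"
    and blocks_free: "\<And>j. j \<in> {1..s} \<Longrightarrow>
      \<not> has_subgraph (VG j - closed_nbhd join_vertices join_edges D) (EG j) VF EF"
    and cut: "\<And>j. j \<in> {2..s} \<Longrightarrow> v j \<in> closed_nbhd join_vertices join_edges D"
  shows "isolating_set join_vertices join_edges VF EF D"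
proof -
  define U where "U = join_vertices - closed_nbhd join_vertices join_edges D"
  have "\<not> has_subgraph U join_edges VF EF"
  proof
    assume "has_subgraph U join_edges VF EF"
    then obtain f where f: "inj_on f VF" "f ` VF \<subseteq> U" "\<forall>e\<in>EF. f ` e \<in> join_edges"
      unfolding has_subgraph_def by blast
    have fU: "f ` e \<subseteq> U" if "e \<in> EF" for e
      using f(2) pattern_edge[OF that] by blast
    have "f u \<in> join_vertices" using f(2) centre unfolding U_def by blast
    then obtain j where j: "j \<in> {1..s}" "f u \<in> VG j" by blast
    have in_block: "f ` e \<in> EG j" if "e \<in> EF" "x \<in> e" "f x \<in> VG j" for e x
      using join_edge_in_block[of "f ` e" D j "f x"] f(3) fU[OF that(1)] cut j(1) that
      unfolding U_def by blast
    have fVG: "f x \<in> VG j" if "x \<in> VF" for x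
    proof (cases "x = u")
      case False
      then have "f ` {u, x} \<in> EG j" using in_block[of "{u, x}" u] centre_adjacent that j(2) by simp
      then show ?thesis using block_edge[OF j(1)] by blast
    qed (use j in simp)
    have "f ` VF \<subseteq> VG j - closed_nbhd join_vertices join_edges D"
      using f(2) fVG unfolding U_def by blast
    moreover have "f ` e \<in> EG j" if e: "e \<in> EF" for e
    proof -
      obtain x where "x \<in> e" using pattern_edge[OF e] by fastforce
      then show ?thesis using in_block[OF e] fVG pattern_edge[OF e] by blast
    qed
    ultimately show False using blocks_free[OF j(1)] f(1) unfolding has_subgraph_def by blast
  qed
  then show ?thesis
    using D has_subgraph_induced_iff pattern_edge unfolding isolating_set_def U_def Let_def by blast
qed

lemma attachments_in_block:
  assumes "s \<ge> 2" "j \<in> {1..s}"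
  shows "attachments j \<subseteq> VG j" "attachments j \<noteq> {}"
proof -
  have "2 \<in> {2..s}" using assms(1) by simp
  then show "attachments j \<subseteq> VG j" "attachments j \<noteq> {}"
    using attachment_ends assms(2) unfolding attachments_def by auto
qed

definition block_cover :: "nat \<Rightarrow> 'a set \<Rightarrow> bool" where
  "block_cover j X \<longleftrightarrow> X \<subseteq> VG j \<and> card X \<le> blocks j \<and>
     \<not> has_subgraph (VG j - closed_nbhd (VG j) (EG j) X - attachments j) (EG j) VF EF"

lemma block_cover_through:
  assumes "j \<in> {1..s}" "y \<in> VG j"
  shows "\<exists>X. block_cover j X \<and> y \<in> X"
proof -
  obtain X where X: "X \<subseteq> VG j" "y \<in> X" "card X \<le> blocks j"
    "\<not> has_subgraph (VG j - closed_nbhd (VG j) (EG j) X) (EG j) VF EF"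
    using block_isolating_through[OF assms] by blast
  then have "\<not> has_subgraph (VG j - closed_nbhd (VG j) (EG j) X - attachments j) (EG j) VF EF"
    using has_subgraph_mono[OF Diff_subset order_refl] by blast
  then show ?thesis using X unfolding block_cover_def by blast
qed

lemma isolating_set_of_block_covers:
  assumes covers: "\<And>j. j \<in> {1..s} \<Longrightarrow> block_cover j (Dj j)"
    and covered: "\<And>j. j \<in> {2..s} \<Longrightarrow>
      v j \<in> closed_nbhd join_vertices join_edges (\<Union>j\<in>{1..s}. Dj j) \<and>
      w j \<in> closed_nbhd join_vertices join_edges (\<Union>j\<in>{1..s}. Dj j)"
  shows "isolating_set join_vertices join_edges VF EF (\<Union>j\<in>{1..s}. Dj j)"
proof (rule isolating_set_of_blocks)
  let ?N = "closed_nbhd join_vertices join_edges (\<Union>j\<in>{1..s}. Dj j)"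
  show "(\<Union>j\<in>{1..s}. Dj j) \<subseteq> join_vertices" using covers unfolding block_cover_def by blast
  fix j assume j: "j \<in> {1..s}"
  have "attachments j \<subseteq> ?N" using covered j unfolding attachments_def by auto
  moreover have "closed_nbhd (VG j) (EG j) (Dj j) \<subseteq> ?N"
    using closed_nbhd_mono[of "Dj j" "\<Union>j\<in>{1..s}. Dj j" "VG j" join_vertices "EG j" join_edges] j
    by blast
  ultimately have "VG j - ?N \<subseteq> VG j - closed_nbhd (VG j) (EG j) (Dj j) - attachments j" by blast
  then show "\<not> has_subgraph (VG j - ?N) (EG j) VF EF"
    using has_subgraph_mono[OF _ order_refl] covers[OF j] unfolding block_cover_def by blast
qed (use covered in blast)

lemma small_isolating_set_if_unrooted:
  assumes s: "s \<ge> 2" and j0: "j0 \<in> {1..s}" and unrooted: "\<not> rooted_block j0"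
  shows "\<exists>D. isolating_set join_vertices join_edges VF EF D \<and> card D < (\<Sum>j=1..s. blocks j)"
proof -
  obtain D0 where "D0 \<subseteq> VG j0" "card D0 < blocks j0"
    "\<not> has_subgraph (VG j0 - closed_nbhd (VG j0) (EG j0) D0 - attachments j0) (EG j0) VF EF"
    using block_isolating_avoiding[OF j0 attachments_in_block[OF s j0]] unrooted
    unfolding rooted_block_def by blast
  then have D0: "block_cover j0 D0" "card D0 < blocks j0" unfolding block_cover_def by simp_all
  obtain Dw where Dw: "\<forall>j\<in>{2..s}. block_cover j (Dw j) \<and> w j \<in> Dw j"
    using bchoice[of "{2..s}" "\<lambda>j X. block_cover j X \<and> w j \<in> X"] block_cover_through
      attachment_ends(2) by force
  obtain D1 where D1: "j0 \<noteq> 1 \<Longrightarrow> block_cover 1 D1 \<and> v j0 \<in> D1"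
    using block_cover_through[of 1 "v j0"] attachment_ends(1)[of j0] j0 s by force
  txt \<open>Both ends of every connecting edge get dominated: block \<open>j0\<close> contributes the small set,
    block 1 a set through \<open>v j0\<close> and every other block a set through its \<open>w j\<close>.\<close>
  define Dj where "Dj j = (if j = j0 then D0 else if j = 1 then D1 else Dw j)" for j
  define D where "D = (\<Union>j\<in>{1..s}. Dj j)"
  have covers: "block_cover j (Dj j)" if "j \<in> {1..s}" for j
    using that D0 D1 Dw unfolding Dj_def by auto
  have "v j \<in> D \<or> w j \<in> D" if j: "j \<in> {2..s}" for j
  proof (cases "j = j0")
    case True
    then have "v j \<in> Dj 1" using D1 j unfolding Dj_def by auto
    then show ?thesis using s unfolding D_def by auto
  next
    case False
    then have "w j \<in> Dj j" using Dw j unfolding Dj_def by auto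
    then show ?thesis using j unfolding D_def by auto
  qed
  then have "isolating_set join_vertices join_edges VF EF D"
    unfolding D_def by (intro isolating_set_of_block_covers covers connecting_edge_dominated)
  moreover have "card D < (\<Sum>j=1..s. blocks j)"
  proof -
    have "card D \<le> (\<Sum>j=1..s. card (Dj j))" unfolding D_def by (rule card_UN_le) simp
    also have "\<dots> < (\<Sum>j=1..s. blocks j)"
    proof (rule sum_strict_mono_ex1)
      show "\<forall>j\<in>{1..s}. card (Dj j) \<le> blocks j" using covers unfolding block_cover_def by blast
      show "\<exists>j\<in>{1..s}. card (Dj j) < blocks j"
        using j0 D0(2) unfolding Dj_def by (intro bexI[of _ j0]) simp_all
    qed simp
    finally show ?thesis .
  qed
  ultimately show ?thesis by blast
qed

lemma rooted_blocks_choice: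
  assumes rooted: "\<And>j. j \<in> {1..s} \<Longrightarrow> rooted_block j"
  obtains vv FV FE ww TE where
    "\<And>j. j \<in> {1..s} \<Longrightarrow> pure_decomp {1..blocks j} VF EF (VG j) (EG j) (vv j) (FV j) (FE j) (ww j) (TE j)"
    "\<And>j. j \<in> {1..s} \<Longrightarrow> attachments j \<subseteq> vv j ` {1..blocks j}"
proof -
  have "\<forall>j\<in>{1..s}. \<exists>t. case t of (vv, FV, FE, ww, TE) \<Rightarrow>
      pure_decomp {1..blocks j} VF EF (VG j) (EG j) vv FV FE ww TE
      \<and> attachments j \<subseteq> vv ` {1..blocks j}"
    using rooted unfolding rooted_block_def by fastforce
  then obtain t where t: "\<forall>j\<in>{1..s}. case t j of (vv, FV, FE, ww, TE) \<Rightarrow>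
      pure_decomp {1..blocks j} VF EF (VG j) (EG j) vv FV FE ww TE
      \<and> attachments j \<subseteq> vv ` {1..blocks j}"
    by (rule bchoice[elim_format]) blast
  define vv where "vv j = fst (t j)" for j
  define FV where "FV j = fst (snd (t j))" for j
  define FE where "FE j = fst (snd (snd (t j)))" for j
  define ww where "ww j = fst (snd (snd (snd (t j))))" for j
  define TE where "TE j = snd (snd (snd (snd (t j))))" for j
  have "pure_decomp {1..blocks j} VF EF (VG j) (EG j) (vv j) (FV j) (FE j) (ww j) (TE j)
      \<and> attachments j \<subseteq> vv j ` {1..blocks j}" if "j \<in> {1..s}" for j
  proof -
    obtain a b c d e where tj: "t j = (a, b, c, d, e)" by (cases "t j") auto
    have "case t j of (vv, FV, FE, ww, TE) \<Rightarrow>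
        pure_decomp {1..blocks j} VF EF (VG j) (EG j) vv FV FE ww TE
      \<and> attachments j \<subseteq> vv ` {1..blocks j}" by (rule bspec[OF t that])
    then show ?thesis unfolding vv_def FV_def FE_def ww_def TE_def tj by simp
  qed
  then show thesis using that by blast
qed

lemma special_constr_if_rooted:
  assumes "\<And>j. j \<in> {1..s} \<Longrightarrow> rooted_block j"
  shows "special_constr (\<Sum>j=1..s. blocks j) 0 VF EF join_vertices join_edges"
proof -
  obtain vv FV FE ww TE where
    P: "\<And>j. j \<in> {1..s} \<Longrightarrow> pure_decomp {1..blocks j} VF EF (VG j) (EG j) (vv j) (FV j) (FE j) (ww j) (TE j)"
    and att: "\<And>j. j \<in> {1..s} \<Longrightarrow> attachments j \<subseteq> vv j ` {1..blocks j}"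
    using rooted_blocks_choice assms by blast
  interpret attached_decomps s VG EG v w VF EF "\<lambda>j. {1..blocks j}" vv ww FV FE TE
    by unfold_locales (rule P)
  have "v j \<in> vv 1 ` {1..blocks 1} \<and> w j \<in> vv j ` {1..blocks j}" if "j \<in> {2..s}" for j
    using att[of 1] att[of j] that unfolding attachments_def by auto
  then have joined: "pure_decomp (SIGMA j:{1..s}. {1..blocks j}) VF EF join_vertices join_edges
      (\<lambda>(j, i). vv j i) (\<lambda>(j, i). FV j i) (\<lambda>(j, i). FE j i) (\<lambda>(j, i). ww j i)
      ((\<Union>j\<in>{1..s}. TE j) \<union> connecting_edges)"
    by (rule join_pure_decomp)
  have "\<exists>g. bij_betw g {1..\<Sum>j=1..s. blocks j} (SIGMA j:{1..s}. {1..blocks j})"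
    by (rule finite_same_card_bij) simp_all
  then obtain g where "bij_betw g {1..\<Sum>j=1..s. blocks j} (SIGMA j:{1..s}. {1..blocks j})" ..
  from pure_decomp_reindex[OF this joined] have "\<exists>vv FV FE ww TE.
      pure_decomp {1..\<Sum>j=1..s. blocks j} VF EF join_vertices join_edges vv FV FE ww TE"
    by blast
  then show ?thesis using special_constr_0_iff[OF sum_blocks_pos] by blast
qed

end

theorem lemma3p7:
  fixes VF :: "'b set" and EF :: "'b set set" and k s :: nat
    and VG :: "nat \<Rightarrow> 'a set" and EG :: "nat \<Rightarrow> 'a set set"
    and v w :: "nat \<Rightarrow> 'a"
  assumes F_graph: "simple_graph VF EF"
    and k: "card EF = k" "k \<ge> 3"
    and F_dom: "dom_one VF EF"
    and s: "s \<ge> 1"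
    and G_graphs: "\<forall>j\<in>{1..s}. simple_graph (VG j) (EG j)"
    and G_disj: "\<forall>i\<in>{1..s}. \<forall>j\<in>{1..s}. i \<noteq> j \<longrightarrow> VG i \<inter> VG j = {}"
    and G_type: "\<forall>j\<in>{1..s}. pure_special (card (EG j)) VF EF (VG j) (EG j)
                                \<or> copy_F_plus_e VF EF (VG j) (EG j)"
    and vw: "\<forall>j\<in>{2..s}. v j \<in> VG 1 \<and> w j \<in> VG j"
    and iota_eq: "real (iota (\<Union>j\<in>{1..s}. VG j)
                    ((\<Union>j\<in>{1..s}. EG j) \<union> {{v j, w j} | j. j \<in> {2..s}}) VF EF)
                  = real (card ((\<Union>j\<in>{1..s}. EG j) \<union> {{v j, w j} | j. j \<in> {2..s}}) + 1)
                    / real (k + 2)"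
  shows "special (card ((\<Union>j\<in>{1..s}. EG j) \<union> {{v j, w j} | j. j \<in> {2..s}})) VF EF
            (\<Union>j\<in>{1..s}. VG j) ((\<Union>j\<in>{1..s}. EG j) \<union> {{v j, w j} | j. j \<in> {2..s}})
         \<or> copy_F_plus_e VF EF (\<Union>j\<in>{1..s}. VG j)
            ((\<Union>j\<in>{1..s}. EG j) \<union> {{v j, w j} | j. j \<in> {2..s}})"
proof -
  obtain u where "u \<in> VF" "\<forall>x\<in>VF. x \<noteq> u \<longrightarrow> {u, x} \<in> EF"
    using F_dom unfolding dom_one_def by blast
  then interpret attached_blocks VF EF u s VG EG v w
    using F_graph k s G_graphs G_disj G_type vw by unfold_locales auto
  let ?Q = "\<Sum>j=1..s. blocks j"
  show ?thesis
  proof (cases "s = 1")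
    case True
    then show ?thesis using block_type[of 1] special_if_pure_special by auto
  next
    case False
    show ?thesis
    proof (cases "\<forall>j\<in>{1..s}. rooted_block j")
      case True
      then show ?thesis
        using special_constr_if_rooted
          special_if_special_constr[OF card_join_edges_blocks sum_blocks_pos]
        by blast
    next
      case False
      then obtain D where D: "isolating_set join_vertices join_edges VF EF D" "card D < ?Q"
        using small_isolating_set_if_unrooted s \<open>s \<noteq> 1\<close> by fastforce
      have "real (iota join_vertices join_edges VF EF) = real ?Q"
        using iota_eq[folded k(1), unfolded card_join_edges_ratio] .
      then have "iota join_vertices join_edges VF EF = ?Q" by (simp only: of_nat_eq_iff)
      then show ?thesis using iota_le_card[OF D(1)] D(2) by simp
    qed
  qed
qed

end
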